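(* Let $X$ be a $T_1$ space in which every open subspace is $C$-embedded (every real-valued continuous function on an open subspace extends to a continuous function on $X$). Then for any two ideals $\mathcal{P},\mathcal{Q}$ of closed subsets of $X$, $C(X)_{\mathcal{P}\vee\mathcal{Q}}=C(X)_\mathcal{P}\vee C(X)_\mathcal{Q}$, where $\mathcal{P}\vee\mathcal{Q}=\{A\cup B\colon A\in\mathcal{P},B\in\mathcal{Q}\}$ and $C(X)_\mathcal{P}\vee C(X)_\mathcal{Q}=\{\sum_{i=1}^m f_ig_i\colon m\in\mathbb{N}, f_i\in C(X)_\mathcal{P}, g_i\in C(X)_\mathcal{Q}\}$.
   Context: An ideal of closed subsets of $X$ is a family $\mathcal{P}$ of closed subsets closed under finite unions and under passing to closed subsets. $D_f$ is the set of discontinuity points of $f\in\mathbb{R}^X$; $C(X)_\mathcal{P}=\{f\in\mathbb{R}^X\colon\overline{D_f}\in\mathcal{P}\}$ with pointwise operations. *)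

theory Defs
  imports "HOL-Analysis.Analysis"
begin

text \<open>Real-valued functions on X are modelled as functions 'a \<Rightarrow> real that vanish
  outside topspace X (so each element of R^X has a unique representative).\<close>

definition real_funs :: "'a topology \<Rightarrow> ('a \<Rightarrow> real) set" where
  "real_funs X = {f. \<forall>x. x \<notin> topspace X \<longrightarrow> f x = 0}"

definition continuous_at_pt :: "'a topology \<Rightarrow> ('a \<Rightarrow> real) \<Rightarrow> 'a \<Rightarrow> bool" where
  "continuous_at_pt X f x \<longleftrightarrow>
     (\<forall>V. open V \<and> f x \<in> V \<longrightarrow> (\<exists>U. openin X U \<and> x \<in> U \<and> (\<forall>y\<in>U. f y \<in> V)))"

definition discont_pts :: "'a topology \<Rightarrow> ('a \<Rightarrow> real) \<Rightarrow> 'a set" where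
  "discont_pts X f = {x \<in> topspace X. \<not> continuous_at_pt X f x}"

definition closed_ideal :: "'a topology \<Rightarrow> 'a set set \<Rightarrow> bool" where
  "closed_ideal X P \<longleftrightarrow>
     (\<forall>A\<in>P. closedin X A) \<and> {} \<in> P \<and>
     (\<forall>A\<in>P. \<forall>B\<in>P. A \<union> B \<in> P) \<and>
     (\<forall>A\<in>P. \<forall>B. closedin X B \<and> B \<subseteq> A \<longrightarrow> B \<in> P)"

definition CP :: "'a topology \<Rightarrow> 'a set set \<Rightarrow> ('a \<Rightarrow> real) set" where
  "CP X P = {f \<in> real_funs X. X closure_of (discont_pts X f) \<in> P}"

definition ideal_join :: "'a set set \<Rightarrow> 'a set set \<Rightarrow> 'a set set" where
  "ideal_join P Q = {A \<union> B | A B. A \<in> P \<and> B \<in> Q}"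

definition prod_sums :: "('a \<Rightarrow> real) set \<Rightarrow> ('a \<Rightarrow> real) set \<Rightarrow> ('a \<Rightarrow> real) set" where
  "prod_sums F G = {h. \<exists>(m::nat) f g. (\<forall>i\<in>{1..m}. f i \<in> F \<and> g i \<in> G) \<and>
                         h = (\<lambda>x. \<Sum>i=1..m. f i x * g i x)}"

definition open_C_embedded :: "'a topology \<Rightarrow> bool" where
  "open_C_embedded X \<longleftrightarrow>
     (\<forall>U f. openin X U \<and> continuous_map (subtopology X U) euclideanreal f \<longrightarrow>
        (\<exists>g. continuous_map X euclideanreal g \<and> (\<forall>x\<in>U. g x = f x)))"

end

theory Submission
  imports Defs
begin

(* Let the closure of the discontinuity set of h be A \<union> B with A \<in> P and B \<in> Q. Then h is
   continuous on the open set W = X - (A \<union> B), so C-embeddedness of W gives a continuous k on X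
   with k = h on W. The function f that equals h - k on A and 0 elsewhere has all its
   discontinuities in A, and h - f coincides with k off B, so h = f * 1 + 1 * (h - f).
   Conversely, the discontinuities of a sum of products lie in the union of those of the factors,
   and the closures of the latter are members of P and Q respectively. *)

lemma continuous_at_pt_iff_tendsto:
  assumes "x \<in> topspace X"
  shows "continuous_at_pt X f x \<longleftrightarrow> (f \<longlongrightarrow> f x) (atin X x)"
proof -
  have "continuous_at_pt X f x \<longleftrightarrow> topcontinuous_at X euclideanreal f x"
    using assms by (simp add: continuous_at_pt_def topcontinuous_at_def)
  then show ?thesis
    using assms by (simp add: topcontinuous_at_atin)
qed

lemma continuous_map_imp_continuous_at_pt:
  assumes "continuous_map X euclideanreal k" "x \<in> topspace X"
  shows "continuous_at_pt X k x"
  using assms by (simp add: continuous_at_pt_iff_tendsto continuous_map_atin)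

lemma continuous_at_pt_transform_openin:
  assumes "openin X U" "x \<in> U" "\<And>y. y \<in> U \<Longrightarrow> f y = g y" "continuous_at_pt X f x"
  shows "continuous_at_pt X g x"
proof -
  have "x \<in> topspace X"
    using assms(1,2) openin_subset by blast
  moreover have "\<forall>\<^sub>F y in atin X x. f y = g y"
    using assms(1-3) by (auto simp: eventually_atin)
  ultimately show ?thesis
    using assms(2-4) by (simp add: continuous_at_pt_iff_tendsto tendsto_cong)
qed

lemma continuous_at_pt_sum_prod:
  assumes "x \<in> topspace X"
    and "\<And>i. i \<in> I \<Longrightarrow> continuous_at_pt X (F i) x \<and> continuous_at_pt X (G i) x"
  shows "continuous_at_pt X (\<lambda>y. \<Sum>i\<in>I. F i y * G i y) x"
  using assms by (simp add: continuous_at_pt_iff_tendsto tendsto_sum tendsto_mult)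

lemma atin_within_le_atin: "atin_within X a S \<le> atin X a"
  unfolding atin_within_def by (intro inf_mono) auto

lemma continuous_map_subtopology_if_continuous_at_pt:
  assumes "\<And>x. x \<in> S \<Longrightarrow> continuous_at_pt X f x"
  shows "continuous_map (subtopology X S) euclideanreal f"
  unfolding continuous_map_atin
proof
  fix x assume x: "x \<in> topspace (subtopology X S)"
  then have "(f \<longlongrightarrow> f x) (atin X x)"
    using assms continuous_at_pt_iff_tendsto by (metis IntE topspace_subtopology)
  then show "limitin euclideanreal f (f x) (atin (subtopology X S) x)"
    using x by (simp add: atin_subtopology_within tendsto_mono[OF atin_within_le_atin])
qed

lemma discont_pts_subset_topspace: "discont_pts X f \<subseteq> topspace X"
  unfolding discont_pts_def by auto

lemma discont_pts_sum_prod: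
  "discont_pts X (\<lambda>y. \<Sum>i\<in>I. F i y * G i y)
     \<subseteq> (\<Union>i\<in>I. discont_pts X (F i) \<union> discont_pts X (G i))"
proof
  fix x assume x: "x \<in> discont_pts X (\<lambda>y. \<Sum>i\<in>I. F i y * G i y)"
  then have "x \<in> topspace X"
    by (simp add: discont_pts_def)
  show "x \<in> (\<Union>i\<in>I. discont_pts X (F i) \<union> discont_pts X (G i))"
  proof (rule ccontr)
    assume "x \<notin> (\<Union>i\<in>I. discont_pts X (F i) \<union> discont_pts X (G i))"
    with \<open>x \<in> topspace X\<close>
    have "continuous_at_pt X (F i) x \<and> continuous_at_pt X (G i) x" if "i \<in> I" for i
      using that by (simp add: discont_pts_def)
    with \<open>x \<in> topspace X\<close> have "continuous_at_pt X (\<lambda>y. \<Sum>i\<in>I. F i y * G i y) x"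
      by (rule continuous_at_pt_sum_prod)
    with x show False
      by (simp add: discont_pts_def)
  qed
qed

lemma discont_pts_subset_if_eq_continuous_off:
  assumes "closedin X A" "continuous_map X euclideanreal k"
    and "\<And>x. x \<in> topspace X - A \<Longrightarrow> f x = k x"
  shows "discont_pts X f \<subseteq> A"
proof
  fix x assume x: "x \<in> discont_pts X f"
  show "x \<in> A"
  proof (rule ccontr)
    assume "x \<notin> A"
    moreover have "x \<in> topspace X"
      using x by (simp add: discont_pts_def)
    ultimately have "x \<in> topspace X - A"
      by blast
    then have "continuous_at_pt X f x"
      using assms(1,3) continuous_map_imp_continuous_at_pt[OF assms(2)]
      by (intro continuous_at_pt_transform_openin[of X "topspace X - A" x k f])
        (simp_all add: openin_diff)
    then show False
      using x by (simp add: discont_pts_def)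
  qed
qed

lemma continuous_map_off_discont_pts:
  assumes "discont_pts X f \<subseteq> C"
  shows "continuous_map (subtopology X (topspace X - C)) euclideanreal f"
  using assms by (intro continuous_map_subtopology_if_continuous_at_pt) (auto simp: discont_pts_def)

lemma open_C_embeddedD:
  assumes "open_C_embedded X" "openin X U" "continuous_map (subtopology X U) euclideanreal f"
  obtains g where "continuous_map X euclideanreal g" "\<And>x. x \<in> U \<Longrightarrow> g x = f x"
proof -
  have "\<exists>g. continuous_map X euclideanreal g \<and> (\<forall>x\<in>U. g x = f x)"
    using assms unfolding open_C_embedded_def by simp
  with that show thesis
    by blast
qed

lemma
  assumes "closed_ideal X P"
  shows closed_ideal_imp_closedin: "A \<in> P \<Longrightarrow> closedin X A"
    and closed_ideal_empty: "{} \<in> P"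
    and closed_ideal_Un: "A \<in> P \<Longrightarrow> B \<in> P \<Longrightarrow> A \<union> B \<in> P"
    and closed_ideal_closedin_subset: "A \<in> P \<Longrightarrow> closedin X C \<Longrightarrow> C \<subseteq> A \<Longrightarrow> C \<in> P"
  using assms unfolding closed_ideal_def by (elim conjE; blast)+

lemma closed_ideal_UN:
  assumes "closed_ideal X P" "finite I" "\<And>i. i \<in> I \<Longrightarrow> S i \<in> P"
  shows "(\<Union>i\<in>I. S i) \<in> P"
  using assms(2,3)
  by (induction I rule: finite_induct)
    (simp_all add: closed_ideal_empty[OF assms(1)] closed_ideal_Un[OF assms(1)])

lemma closed_ideal_closure_of_subset:
  assumes "closed_ideal X P" "A \<in> P" "D \<subseteq> A"
  shows "X closure_of D \<in> P"
proof -
  have "X closure_of D \<subseteq> A"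
    using closure_of_minimal[OF assms(3) closed_ideal_imp_closedin[OF assms(1,2)]] .
  then show ?thesis
    by (rule closed_ideal_closedin_subset[OF assms(1,2) closedin_closure_of])
qed

lemma closedin_in_ideal_join:
  assumes "closed_ideal X P" "closed_ideal X Q" "A \<in> P" "B \<in> Q"
    and "closedin X C" "C \<subseteq> A \<union> B"
  shows "C \<in> ideal_join P Q"
proof -
  have "C \<inter> A \<in> P"
    using closed_ideal_closedin_subset[OF assms(1,3)] closed_ideal_imp_closedin[OF assms(1,3)] assms(5)
    by (simp add: closedin_Int)
  moreover have "C \<inter> B \<in> Q"
    using closed_ideal_closedin_subset[OF assms(2,4)] closed_ideal_imp_closedin[OF assms(2,4)] assms(5)
    by (simp add: closedin_Int)
  moreover have "C = (C \<inter> A) \<union> (C \<inter> B)"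
    using assms(6) by blast
  ultimately show ?thesis
    unfolding ideal_join_def by blast
qed

lemma CP_memI:
  assumes "closed_ideal X P" "f \<in> real_funs X" "A \<in> P" "discont_pts X f \<subseteq> A"
  shows "f \<in> CP X P"
  using assms(2) closed_ideal_closure_of_subset[OF assms(1,3,4)] by (simp add: CP_def)

lemma const_on_topspace_in_CP:
  assumes "closed_ideal X P"
  shows "(\<lambda>x. if x \<in> topspace X then c else 0) \<in> CP X P"
proof (rule CP_memI[OF assms _ closed_ideal_empty[OF assms]])
  show "(\<lambda>x. if x \<in> topspace X then c else 0) \<in> real_funs X"
    by (simp add: real_funs_def)
  show "discont_pts X (\<lambda>x. if x \<in> topspace X then c else 0) \<subseteq> {}"
    by (rule discont_pts_subset_if_eq_continuous_off[where k = "\<lambda>_. c"]) simp_all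
qed

lemma add_prod_in_prod_sums:
  assumes "f1 \<in> F" "g1 \<in> G" "f2 \<in> F" "g2 \<in> G"
  shows "(\<lambda>x. f1 x * g1 x + f2 x * g2 x) \<in> prod_sums F G"
proof -
  define f where "f i = (if i = 1 then f1 else f2)" for i :: nat
  define g where "g i = (if i = 1 then g1 else g2)" for i :: nat
  have "(\<lambda>x. f1 x * g1 x + f2 x * g2 x) = (\<lambda>x. \<Sum>i=1..2. f i x * g i x)"
    by (simp add: f_def g_def numeral_2_eq_2)
  moreover have "\<forall>i\<in>{1..2}. f i \<in> F \<and> g i \<in> G"
    using assms by (simp add: f_def g_def)
  ultimately show ?thesis
    unfolding prod_sums_def by blast
qed

lemma prod_sums_subset_CP_ideal_join:
  assumes "closed_ideal X P" "closed_ideal X Q"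
  shows "prod_sums (CP X P) (CP X Q) \<subseteq> CP X (ideal_join P Q)"
proof
  fix h assume "h \<in> prod_sums (CP X P) (CP X Q)"
  then obtain m F G where FG: "\<forall>i\<in>{1..m::nat}. F i \<in> CP X P \<and> G i \<in> CP X Q"
    and h: "h = (\<lambda>x. \<Sum>i=1..m. F i x * G i x)"
    unfolding prod_sums_def mem_Collect_eq by blast
  define A where "A = (\<Union>i\<in>{1..m}. X closure_of discont_pts X (F i))"
  define B where "B = (\<Union>i\<in>{1..m}. X closure_of discont_pts X (G i))"
  have A: "A \<in> P"
    unfolding A_def by (rule closed_ideal_UN[OF assms(1)]) (use FG in \<open>simp_all add: CP_def\<close>)
  have B: "B \<in> Q"
    unfolding B_def by (rule closed_ideal_UN[OF assms(2)]) (use FG in \<open>simp_all add: CP_def\<close>)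
  have "discont_pts X h \<subseteq> (\<Union>i\<in>{1..m}. discont_pts X (F i) \<union> discont_pts X (G i))"
    unfolding h by (rule discont_pts_sum_prod)
  also have "\<dots> \<subseteq> A \<union> B"
    unfolding A_def B_def UN_Un_distrib
    by (intro Un_mono UN_mono order_refl closure_of_subset discont_pts_subset_topspace)
  finally have "X closure_of discont_pts X h \<subseteq> A \<union> B"
    using closed_ideal_imp_closedin[OF assms(1) A] closed_ideal_imp_closedin[OF assms(2) B]
    by (intro closure_of_minimal closedin_Un)
  then have "X closure_of discont_pts X h \<in> ideal_join P Q"
    by (rule closedin_in_ideal_join[OF assms A B closedin_closure_of])
  moreover have "h \<in> real_funs X"
    using FG by (simp add: h real_funs_def CP_def)
  ultimately show "h \<in> CP X (ideal_join P Q)"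
    by (simp add: CP_def)
qed

lemma CP_ideal_join_split:
  assumes "open_C_embedded X" "closed_ideal X P" "closed_ideal X Q"
    and "h \<in> CP X (ideal_join P Q)"
  obtains f g where "f \<in> CP X P" "g \<in> CP X Q" "\<And>x. h x = f x + g x"
proof -
  obtain A B where A: "A \<in> P" and B: "B \<in> Q" and AB: "X closure_of discont_pts X h = A \<union> B"
    using assms(4) unfolding CP_def ideal_join_def by blast
  have closed: "closedin X A" "closedin X B"
    using closed_ideal_imp_closedin[OF assms(2) A] closed_ideal_imp_closedin[OF assms(3) B] .
  have "discont_pts X h \<subseteq> A \<union> B"
    using closure_of_subset[OF discont_pts_subset_topspace, of X h] AB by simp
  then have "continuous_map (subtopology X (topspace X - (A \<union> B))) euclideanreal h"
    by (rule continuous_map_off_discont_pts)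
  moreover have "openin X (topspace X - (A \<union> B))"
    using closed by (intro openin_diff openin_topspace closedin_Un)
  ultimately obtain k where k: "continuous_map X euclideanreal k"
    and kh: "\<And>x. x \<in> topspace X - (A \<union> B) \<Longrightarrow> k x = h x"
    using open_C_embeddedD[OF assms(1)] by metis
  define f where "f x = (if x \<in> A then h x - k x else 0)" for x
  have "f \<in> real_funs X"
    using closedin_subset[OF closed(1)] by (auto simp: f_def real_funs_def)
  moreover have "discont_pts X f \<subseteq> A"
    by (rule discont_pts_subset_if_eq_continuous_off[OF closed(1), where k = "\<lambda>_. 0"])
      (simp_all add: f_def)
  ultimately have f: "f \<in> CP X P"
    by (rule CP_memI[OF assms(2) _ A])
  have "(\<lambda>x. h x - f x) \<in> real_funs X"
    using \<open>f \<in> real_funs X\<close> assms(4) by (simp add: CP_def real_funs_def)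
  moreover have "discont_pts X (\<lambda>x. h x - f x) \<subseteq> B"
    by (rule discont_pts_subset_if_eq_continuous_off[OF closed(2) k]) (auto simp: f_def kh)
  ultimately have "(\<lambda>x. h x - f x) \<in> CP X Q"
    by (rule CP_memI[OF assms(3) _ B])
  with f show thesis
    by (rule that) simp
qed

lemma CP_ideal_join_subset_prod_sums:
  assumes "open_C_embedded X" "closed_ideal X P" "closed_ideal X Q"
  shows "CP X (ideal_join P Q) \<subseteq> prod_sums (CP X P) (CP X Q)"
proof
  fix h assume "h \<in> CP X (ideal_join P Q)"
  then obtain f g where f: "f \<in> CP X P" and g: "g \<in> CP X Q" and h: "\<And>x. h x = f x + g x"
    using CP_ideal_join_split[OF assms] by blast
  define e where "e x = (if x \<in> topspace X then 1 else 0 :: real)" for x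
  have "e \<in> CP X P" "e \<in> CP X Q"
    unfolding e_def by (rule const_on_topspace_in_CP[OF assms(2)] const_on_topspace_in_CP[OF assms(3)])+
  moreover have "h = (\<lambda>x. f x * e x + e x * g x)"
    using f g by (auto simp: h e_def CP_def real_funs_def)
  ultimately show "h \<in> prod_sums (CP X P) (CP X Q)"
    using add_prod_in_prod_sums[OF f _ _ g] by simp
qed

theorem theorem2p3:
  fixes X :: "'a topology" and P Q :: "'a set set"
  assumes "t1_space X" and "open_C_embedded X"
    and "closed_ideal X P" and "closed_ideal X Q"
  shows "CP X (ideal_join P Q) = prod_sums (CP X P) (CP X Q)"
  \<comment> \<open>The argument does not use the \<open>T\<^sub>1\<close> hypothesis.\<close>
  using CP_ideal_join_subset_prod_sums[OF assms(2-4)] prod_sums_subset_CP_ideal_join[OF assms(3,4)]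
  by (rule antisym)

end
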